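(* Let $n\ge 2$, let $A\in\mathbb{R}^{n\times n}$ be symmetric with zero diagonal, let $\lambda>0$, and let $p_1,\dots,p_n\in[0,1)$ with $p_{\max}=\max_ip_i$. Then for every fixed $w\in\mathbb{R}^{2n-1}$, $$\mathbb{E}_{X\sim\mathcal{D}_{\mathsf{miss}}}[G_{\mathsf{miss}}(w;X)]=\nabla\widetilde S(w),$$ and for all $X\in\{-1,0,1\}^n$ and all $w\in\Delta(\lambda,2n-1)$, $$\|G_{\mathsf{miss}}(w;X)\|_\infty\le\frac{1}{(1-p_{\max})^2}\exp\left(\frac{\lambda}{1-p_{\max}}\right).$$
   Context: Ising model $\mathcal{D}=\mathcal{D}(A,0)$ on $\{-1,1\}^n$: $\Pr[Z=z]\propto\exp\big(\sum_{i<j}A_{ij}z_iz_j\big)$. Missing-data distribution $\mathcal{D}_{\mathsf{miss}}$: draw $Z\sim\mathcal{D}$ and independent $C_1,\dots,C_n$ with $C_i\in\{0,1\}$, $\Pr[C_i=1]=1-p_i$; output $X$ with $X_i=C_iZ_i$ (a missing entry is recorded as $0$). $\Delta(W,k)=\{x\in\mathbb{R}^k:x\ge0,\sum_ix_i=W\}$. Simplex ISO: $\widetilde S(w)=\mathbb{E}_{Z\sim\mathcal{D}}\big[\exp\big(-\sum_{j=1}^{n-1}(w_j-w_{n-1+j})Z_nZ_j\big)\big]$ for $w\in\mathbb{R}^{2n-1}$. Estimator: for $w\in\mathbb{R}^{2n-1}$, $X\in\{-1,0,1\}^n$, put $v_j=w_j-w_{n-1+j}$ and for $i\in[n-1]$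 $$g^i_{\mathsf{miss}}(w;X)=-\frac{X_n}{1-p_n}\cdot\frac{\exp(-v_iX_nX_i)X_i}{1-p_i}\cdot\prod_{j\in[n-1],\,j\ne i}\frac{\exp(-v_jX_nX_j)-p_j}{1-p_j},$$ and $G_{\mathsf{miss}}(w;X)=\sum_{i=1}^{n-1}g^i_{\mathsf{miss}}(w;X)(e^i-e^{n-1+i})\in\mathbb{R}^{2n-1}$, where $e^i$ is the $i$-th standard basis vector of $\mathbb{R}^{2n-1}$. *)

theory Defs
  imports Complex_Main "HOL-Library.FuncSet"
begin

text \<open>Nodes are indexed by 1..n; vectors w in R^(2n-1) are functions nat => real,
  only the entries 1..2n-1 matter.\<close>

definition spins :: "nat \<Rightarrow> (nat \<Rightarrow> real) set" where
  "spins n = PiE {1..n} (\<lambda>_. {-1, 1})"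

definition masks :: "nat \<Rightarrow> (nat \<Rightarrow> real) set" where
  "masks n = PiE {1..n} (\<lambda>_. {0, 1})"

definition obs_space :: "nat \<Rightarrow> (nat \<Rightarrow> real) set" where
  "obs_space n = PiE {1..n} (\<lambda>_. {-1, 0, 1})"

definition ising_weight :: "(nat \<Rightarrow> nat \<Rightarrow> real) \<Rightarrow> nat \<Rightarrow> (nat \<Rightarrow> real) \<Rightarrow> real" where
  "ising_weight A n z = exp (\<Sum>i\<in>{1..n}. \<Sum>j\<in>{i<..n}. A i j * z i * z j)"

definition ising_prob :: "(nat \<Rightarrow> nat \<Rightarrow> real) \<Rightarrow> nat \<Rightarrow> (nat \<Rightarrow> real) \<Rightarrow> real" where
  "ising_prob A n z = ising_weight A n z / (\<Sum>y\<in>spins n. ising_weight A n y)"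

definition ising_expect :: "(nat \<Rightarrow> nat \<Rightarrow> real) \<Rightarrow> nat \<Rightarrow> ((nat \<Rightarrow> real) \<Rightarrow> real) \<Rightarrow> real" where
  "ising_expect A n f = (\<Sum>z\<in>spins n. ising_prob A n z * f z)"

definition mask_prob :: "(nat \<Rightarrow> real) \<Rightarrow> nat \<Rightarrow> (nat \<Rightarrow> real) \<Rightarrow> real" where
  "mask_prob p n c = (\<Prod>i\<in>{1..n}. if c i = 1 then 1 - p i else p i)"

definition miss_expect :: "(nat \<Rightarrow> nat \<Rightarrow> real) \<Rightarrow> (nat \<Rightarrow> real) \<Rightarrow> nat \<Rightarrow> ((nat \<Rightarrow> real) \<Rightarrow> 'a::real_vector) \<Rightarrow> 'a" where
  "miss_expect A p n f = (\<Sum>z\<in>spins n. \<Sum>c\<in>masks n.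
      (ising_prob A n z * mask_prob p n c) *\<^sub>R f (\<lambda>i. c i * z i))"

definition simplex :: "real \<Rightarrow> nat \<Rightarrow> (nat \<Rightarrow> real) set" where
  "simplex W k = {x. (\<forall>i\<in>{1..k}. x i \<ge> 0) \<and> (\<Sum>i\<in>{1..k}. x i) = W}"

definition S_tilde :: "(nat \<Rightarrow> nat \<Rightarrow> real) \<Rightarrow> nat \<Rightarrow> (nat \<Rightarrow> real) \<Rightarrow> real" where
  "S_tilde A n w = ising_expect A n
     (\<lambda>z. exp (- (\<Sum>j\<in>{1..n-1}. (w j - w (n - 1 + j)) * z n * z j)))"

definition e_vec :: "nat \<Rightarrow> nat \<Rightarrow> real" where
  "e_vec i = (\<lambda>k. if k = i then 1 else 0)"

definition g_miss :: "(nat \<Rightarrow> real) \<Rightarrow> nat \<Rightarrow> nat \<Rightarrow> (nat \<Rightarrow> real) \<Rightarrow> (nat \<Rightarrow> real) \<Rightarrow> real" where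
  "g_miss p n i w X =
     (let v = (\<lambda>j. w j - w (n - 1 + j)) in
      - (X n / (1 - p n)) * (exp (- v i * X n * X i) * X i / (1 - p i))
        * (\<Prod>j\<in>{1..n-1} - {i}. (exp (- v j * X n * X j) - p j) / (1 - p j)))"

definition G_miss :: "(nat \<Rightarrow> real) \<Rightarrow> nat \<Rightarrow> (nat \<Rightarrow> real) \<Rightarrow> (nat \<Rightarrow> real) \<Rightarrow> (nat \<Rightarrow> real)" where
  "G_miss p n w X = (\<lambda>k. \<Sum>i\<in>{1..n-1}. g_miss p n i w X * (e_vec i k - e_vec (n - 1 + i) k))"

end

theory Submission imports Defs "HOL-Analysis.Convex" begin

text \<open>Fix Z = z and average over the masks. Each coordinate of \<open>G_miss\<close> is
  \<open>\<Sum>\<^sub>i g\<^sub>i \<partial>v\<^sub>i/\<partial>w\<^sub>k\<close>, and \<open>g\<^sub>i\<close> is a product of factors each depending on a single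
  independent mask bit: the leading factor \<open>X\<^sub>n\<close> kills the product when \<open>C\<^sub>n = 0\<close>, so
  \<open>X\<^sub>n\<close> may be replaced by \<open>z\<^sub>n\<close> in the other factors. Every factor is debiased,
  \<open>E[(exp(-v\<^sub>j z\<^sub>n C\<^sub>j z\<^sub>j) - p\<^sub>j)/(1 - p\<^sub>j)] = exp(-v\<^sub>j z\<^sub>n z\<^sub>j)\<close>, so the mask average of
  \<open>g\<^sub>i\<close> is \<open>-z\<^sub>n z\<^sub>i exp(-\<Sum>\<^sub>j v\<^sub>j z\<^sub>n z\<^sub>j)\<close>, which is exactly the integrand of
  \<open>\<partial>S~/\<partial>v\<^sub>i\<close>. For the bound, convexity of exp gives
  \<open>|exp t - p|/(1 - p) \<le> exp(|t|/(1 - p))\<close>, and on the simplex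
  \<open>\<Sum>\<^sub>j |v\<^sub>j| \<le> \<Sum>\<^sub>k w\<^sub>k = \<lambda>\<close>.\<close>

lemma one_plus_mult_exp_minus_one_le_exp:
  fixes a q :: real
  assumes "a \<ge> 0" "q \<ge> 1"
  shows "1 + q * (exp a - 1) \<le> exp (q * a)"
proof -
  have "exp ((1 - 1/q) *\<^sub>R 0 + (1/q) *\<^sub>R (q*a)) \<le> (1 - 1/q) * exp 0 + (1/q) * exp (q*a)"
    using convex_onD[OF exp_convex, of "1/q" 0 "q*a"] assms by auto
  moreover have "(1 - 1/q) *\<^sub>R 0 + (1/q) *\<^sub>R (q*a) = a" using assms by simp
  ultimately have "exp a \<le> (1 - 1/q) + (1/q) * exp (q*a)" by simp
  hence "q * exp a \<le> q * ((1 - 1/q) + (1/q) * exp (q*a))" using assms by simp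
  also have "\<dots> = q - 1 + exp (q*a)" using assms by (simp add: field_simps)
  finally show ?thesis by (simp add: algebra_simps)
qed

lemma abs_exp_minus_div_le_exp:
  fixes p pm t a :: real
  assumes p: "0 \<le> p" "p \<le> pm" "pm < 1" and ta: "\<bar>t\<bar> \<le> a"
  shows "\<bar>exp t - p\<bar> / (1 - p) \<le> exp (a / (1 - pm))"
proof -
  define q where "q = 1 / (1 - p)"
  have q1: "q \<ge> 1" using p by (simp add: q_def field_simps)
  have a0: "a \<ge> 0" using ta by linarith
  have "q * a \<le> a / (1 - pm)"
    unfolding q_def using p a0 by (simp add: divide_left_mono)
  hence "exp (q * a) \<le> exp (a / (1 - pm))" by simp
  moreover have "\<bar>exp t - p\<bar> / (1 - p) \<le> exp (q * a)"
  proof (cases "exp t \<ge> p")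
    case True
    have "exp t \<le> exp a" using ta by simp
    hence "\<bar>exp t - p\<bar> / (1 - p) \<le> (exp a - p) / (1 - p)"
      using True p by (simp add: divide_right_mono)
    also have "\<dots> = 1 + q * (exp a - 1)" using p by (simp add: q_def field_simps)
    also have "\<dots> \<le> exp (q * a)" by (rule one_plus_mult_exp_minus_one_le_exp[OF a0 q1])
    finally show ?thesis .
  next
    case False
    have "exp (-a) \<le> exp t" using ta by simp
    moreover have "1 - a \<le> exp (-a)" using exp_ge_add_one_self[of "-a"] by simp
    ultimately have "\<bar>exp t - p\<bar> \<le> a" using False p by linarith
    hence "\<bar>exp t - p\<bar> / (1 - p) \<le> q * a" using p by (simp add: q_def divide_right_mono)
    also have "\<dots> \<le> exp (q * a)" using exp_ge_add_one_self[of "q * a"] by linarith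
    finally show ?thesis .
  qed
  ultimately show ?thesis by linarith
qed

lemma sum_masks_prod:
  fixes f :: "nat \<Rightarrow> real \<Rightarrow> real"
  shows "(\<Sum>c\<in>masks n. \<Prod>j\<in>{1..n}. f j (c j)) = (\<Prod>j\<in>{1..n}. f j 0 + f j 1)"
  unfolding masks_def by (subst prod_sum_PiE[symmetric]) auto

lemma sum_mask_prob_mult_prod:
  fixes f :: "nat \<Rightarrow> real \<Rightarrow> real"
  shows "(\<Sum>c\<in>masks n. mask_prob p n c * (\<Prod>j\<in>{1..n}. f j (c j)))
       = (\<Prod>j\<in>{1..n}. p j * f j 0 + (1 - p j) * f j 1)"
proof -
  define h where "h j b = (if b = 1 then 1 - p j else p j) * f j b" for j and b :: real
  have "(\<Sum>c\<in>masks n. mask_prob p n c * (\<Prod>j\<in>{1..n}. f j (c j)))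
      = (\<Sum>c\<in>masks n. \<Prod>j\<in>{1..n}. h j (c j))"
    by (simp add: mask_prob_def h_def prod.distrib)
  also have "\<dots> = (\<Prod>j\<in>{1..n}. h j 0 + h j 1)" by (rule sum_masks_prod)
  finally show ?thesis by (simp add: h_def)
qed

text \<open>The j-th factor of \<open>g_miss p n i w (\<lambda>j. c j * z j)\<close> as a function of the mask bit
  \<open>b = c j\<close> alone.\<close>

definition g_miss_factor ::
    "(nat \<Rightarrow> real) \<Rightarrow> nat \<Rightarrow> nat \<Rightarrow> (nat \<Rightarrow> real) \<Rightarrow> (nat \<Rightarrow> real) \<Rightarrow> nat \<Rightarrow> real \<Rightarrow> real" where
  "g_miss_factor p n i w z j b = (let v = (\<lambda>j. w j - w (n - 1 + j)) in
     if j = n then - (b * z n) / (1 - p n)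
     else if j = i then exp (- v i * z n * (b * z i)) * (b * z i) / (1 - p i)
     else (exp (- v j * z n * (b * z j)) - p j) / (1 - p j))"

lemma atLeastAtMost_insert_top: "1 \<le> n \<Longrightarrow> {1..n} = insert n {1..n - 1::nat}"
  by auto

lemma g_miss_mask_eq_prod:
  assumes i: "i \<in> {1..n-1}" and c: "c \<in> masks n"
  shows "g_miss p n i w (\<lambda>j. c j * z j) = (\<Prod>j\<in>{1..n}. g_miss_factor p n i w z j (c j))"
proof -
  let ?f = "\<lambda>j. g_miss_factor p n i w z j (c j)"
  have ni: "i \<noteq> n" "1 \<le> n" using i by auto
  have cn: "c n = 0 \<or> c n = 1" using c ni unfolding masks_def by (auto simp: PiE_iff)
  have "prod ?f {1..n} = ?f n * prod ?f {1..n-1}"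
    using atLeastAtMost_insert_top[OF ni(2)] ni by simp
  also have "prod ?f {1..n-1} = ?f i * prod ?f ({1..n-1} - {i})"
    by (rule prod.remove) (use i in auto)
  finally have R: "prod ?f {1..n} = ?f n * (?f i * prod ?f ({1..n-1} - {i}))" .
  show ?thesis
  proof (cases "c n = 0")
    case True
    then show ?thesis unfolding R by (simp add: g_miss_def g_miss_factor_def Let_def)
  next
    case False
    hence c1: "c n = 1" using cn by simp
    have "prod ?f ({1..n-1} - {i}) =
      (\<Prod>j\<in>{1..n-1}-{i}. (exp (- (w j - w (n - 1 + j)) * (c n * z n) * (c j * z j)) - p j) / (1 - p j))"
      by (rule prod.cong) (auto simp: g_miss_factor_def Let_def c1)
    then show ?thesis unfolding R g_miss_def Let_def using ni c1
      by (simp add: g_miss_factor_def) (simp add: algebra_simps)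
  qed
qed

lemma mask_expect_g_miss:
  assumes i: "i \<in> {1..n-1}" and p: "\<forall>j\<in>{1..n}. p j < 1"
  shows "(\<Sum>c\<in>masks n. mask_prob p n c * g_miss p n i w (\<lambda>j. c j * z j))
     = - z n * z i * exp (- (\<Sum>j\<in>{1..n-1}. (w j - w (n - 1 + j)) * z n * z j))"
proof -
  define e where "e j = exp (- (w j - w (n - 1 + j)) * z n * z j)" for j
  define f where "f j = (if j = n then - z n else if j = i then z i * e j else e j)" for j
  have ni: "i \<noteq> n" "1 \<le> n" using i by auto
  have "(\<Sum>c\<in>masks n. mask_prob p n c * g_miss p n i w (\<lambda>j. c j * z j))
      = (\<Sum>c\<in>masks n. mask_prob p n c * (\<Prod>j\<in>{1..n}. g_miss_factor p n i w z j (c j)))"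
    by (rule sum.cong) (simp_all add: g_miss_mask_eq_prod[OF i])
  also have "\<dots> = (\<Prod>j\<in>{1..n}. p j * g_miss_factor p n i w z j 0
                                + (1 - p j) * g_miss_factor p n i w z j 1)"
    by (rule sum_mask_prob_mult_prod)
  also have "\<dots> = prod f {1..n}"
  proof (rule prod.cong)
    fix j assume "j \<in> {1..n}"
    hence "p j \<noteq> 1" using p by fastforce
    then show "p j * g_miss_factor p n i w z j 0 + (1 - p j) * g_miss_factor p n i w z j 1 = f j"
      by (auto simp: f_def e_def g_miss_factor_def Let_def field_simps)
  qed simp
  also have "\<dots> = - z n * (\<Prod>j\<in>{1..n-1}. (if j = i then z i else 1) * e j)"
    using atLeastAtMost_insert_top[OF ni(2)] ni by (auto simp: f_def intro!: prod.cong)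
  also have "\<dots> = - z n * z i * prod e {1..n-1}"
    using i by (simp add: prod.distrib prod.delta)
  also have "prod e {1..n-1} = exp (- (\<Sum>j\<in>{1..n-1}. (w j - w (n - 1 + j)) * z n * z j))"
    unfolding e_def sum_negf[symmetric] by (subst exp_sum) (auto intro!: prod.cong simp: algebra_simps)
  finally show ?thesis .
qed

lemma miss_expect_G_miss:
  assumes p: "\<forall>j\<in>{1..n}. p j < 1"
  shows "miss_expect A p n (\<lambda>X. G_miss p n w X k)
       = ising_expect A n (\<lambda>z. exp (- (\<Sum>j\<in>{1..n-1}. (w j - w (n - 1 + j)) * z n * z j))
            * - (\<Sum>j\<in>{1..n-1}. (e_vec j k - e_vec (n - 1 + j) k) * z n * z j))"
  unfolding miss_expect_def ising_expect_def
proof (rule sum.cong)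
  fix z :: "nat \<Rightarrow> real"
  define E where "E = exp (- (\<Sum>j\<in>{1..n-1}. (w j - w (n - 1 + j)) * z n * z j))"
  define d where "d i = e_vec i k - e_vec (n - 1 + i) k" for i
  let ?P = "ising_prob A n z" and ?m = "mask_prob p n"
  let ?g = "\<lambda>i c. g_miss p n i w (\<lambda>j. c j * z j)"
  have "(\<Sum>c\<in>masks n. (?P * ?m c) *\<^sub>R G_miss p n w (\<lambda>j. c j * z j) k)
      = (\<Sum>c\<in>masks n. \<Sum>i\<in>{1..n-1}. ?P * d i * (?m c * ?g i c))"
    by (simp add: G_miss_def d_def sum_distrib_left mult_ac)
  also have "\<dots> = (\<Sum>i\<in>{1..n-1}. ?P * d i * (\<Sum>c\<in>masks n. ?m c * ?g i c))"
    by (subst sum.swap) (simp add: sum_distrib_left)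
  also have "\<dots> = (\<Sum>i\<in>{1..n-1}. ?P * d i * (- z n * z i * E))"
    by (rule sum.cong) (simp_all add: mask_expect_g_miss[OF _ p] E_def)
  also have "\<dots> = ?P * (E * - (\<Sum>j\<in>{1..n-1}. d j * z n * z j))"
    by (simp add: sum_distrib_left sum_negf[symmetric] mult_ac)
  finally show "(\<Sum>c\<in>masks n. (?P * ?m c) *\<^sub>R G_miss p n w (\<lambda>j. c j * z j) k)
      = ?P * (E * - (\<Sum>j\<in>{1..n-1}. (e_vec j k - e_vec (n - 1 + j) k) * z n * z j))"
    by (simp add: d_def)
qed simp

lemma fun_upd_has_real_derivative:
  "((\<lambda>t. (w(k := t)) j) has_real_derivative e_vec j k) (at x)"
  by (cases "j = k") (simp_all add: e_vec_def)

lemma S_tilde_has_real_derivative: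
  "((\<lambda>t. S_tilde A n (w(k := t))) has_real_derivative
      ising_expect A n (\<lambda>z. exp (- (\<Sum>j\<in>{1..n-1}. (w j - w (n - 1 + j)) * z n * z j))
        * - (\<Sum>j\<in>{1..n-1}. (e_vec j k - e_vec (n - 1 + j) k) * z n * z j))) (at (w k))"
proof -
  have "((\<lambda>t. S_tilde A n (w(k := t))) has_real_derivative
      ising_expect A n (\<lambda>z. exp (- (\<Sum>j\<in>{1..n-1}. ((w(k := w k)) j - (w(k := w k)) (n - 1 + j)) * z n * z j))
        * - (\<Sum>j\<in>{1..n-1}. (e_vec j k - e_vec (n - 1 + j) k) * z n * z j))) (at (w k))"
    unfolding S_tilde_def ising_expect_def
    by (intro DERIV_sum DERIV_cmult DERIV_fun_exp DERIV_minus DERIV_cmult_right DERIV_diff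
        fun_upd_has_real_derivative)
  then show ?thesis by simp
qed

lemma abs_G_miss_le:
  assumes g: "\<forall>i\<in>{1..n-1}. \<bar>g_miss p n i w X\<bar> \<le> B" and B: "B \<ge> 0"
  shows "\<bar>G_miss p n w X k\<bar> \<le> B"
proof (cases "k \<le> n - 1")
  case True
  have "G_miss p n w X k = (\<Sum>i\<in>{1..n-1}. if i = k then g_miss p n i w X else 0)"
    unfolding G_miss_def e_vec_def by (rule sum.cong) (use True in auto)
  then show ?thesis using g B by (auto simp: sum.delta)
next
  case False
  have "G_miss p n w X k = - (\<Sum>i\<in>{1..n-1}. if i = k - (n - 1) then g_miss p n i w X else 0)"
    unfolding G_miss_def e_vec_def sum_negf[symmetric] by (rule sum.cong) (use False in auto)
  then show ?thesis using g B by (auto simp: sum.delta)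
qed

lemma sum_abs_diff_le_if_simplex:
  assumes w: "w \<in> simplex lam (2*n-1)"
  shows "(\<Sum>j\<in>{1..n-1}. \<bar>w j - w (n - 1 + j)\<bar>) \<le> lam"
proof -
  have w0: "\<forall>i\<in>{1..2*n-1}. w i \<ge> 0" and ws: "(\<Sum>i\<in>{1..2*n-1}. w i) = lam"
    using w unfolding simplex_def by auto
  let ?S = "{1..n-1}" and ?T = "(\<lambda>j. n - 1 + j) ` {1..n-1}"
  have "(\<Sum>j\<in>?S. \<bar>w j - w (n - 1 + j)\<bar>) \<le> (\<Sum>j\<in>?S. w j + w (n - 1 + j))"
  proof (rule sum_mono)
    fix j assume "j \<in> ?S"
    then have "j \<in> {1..2*n-1}" "n - 1 + j \<in> {1..2*n-1}" by auto
    then have "w j \<ge> 0" "w (n - 1 + j) \<ge> 0" using w0 by blast+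
    then show "\<bar>w j - w (n - 1 + j)\<bar> \<le> w j + w (n - 1 + j)" by linarith
  qed
  also have "\<dots> = sum w ?S + sum w ?T"
    by (subst sum.reindex) (auto simp: inj_on_def sum.distrib)
  also have "\<dots> = sum w (?S \<union> ?T)"
    by (rule sum.union_disjoint[symmetric]) auto
  also have "\<dots> \<le> sum w {1..2*n-1}"
    by (rule sum_mono2) (use w0 in auto)
  finally show ?thesis using ws by simp
qed

lemma abs_le_one_if_obs_space:
  assumes "X \<in> obs_space n" "j \<in> {1..n}"
  shows "\<bar>X j\<bar> \<le> 1"
proof -
  have "X j \<in> {-1, 0, 1}" using assms unfolding obs_space_def by (rule PiE_mem)
  then show ?thesis by auto
qed

lemma abs_mult_div_one_minus_le:
  fixes e x p pm :: real
  assumes "\<bar>x\<bar> \<le> 1" "0 \<le> p" "p \<le> pm" "pm < 1"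
  shows "\<bar>e * x / (1 - p)\<bar> \<le> \<bar>e\<bar> / (1 - pm)"
proof -
  have "\<bar>e * x / (1 - p)\<bar> = \<bar>e\<bar> * \<bar>x\<bar> / (1 - p)" using assms by (simp add: abs_mult)
  also have "\<dots> \<le> \<bar>e\<bar> / (1 - p)"
    using assms by (simp add: divide_right_mono mult_left_le)
  also have "\<dots> \<le> \<bar>e\<bar> / (1 - pm)" using assms by (simp add: divide_left_mono)
  finally show ?thesis .
qed

lemma abs_g_miss_le:
  assumes i: "i \<in> {1..n-1}" and X: "X \<in> obs_space n"
    and lam: "(\<Sum>j\<in>{1..n-1}. \<bar>w j - w (n - 1 + j)\<bar>) \<le> lam"
    and p: "\<forall>j\<in>{1..n}. 0 \<le> p j \<and> p j \<le> pm" and pm: "pm < 1"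
  shows "\<bar>g_miss p n i w X\<bar> \<le> 1 / (1 - pm)^2 * exp (lam / (1 - pm))"
proof -
  define v where "v j = w j - w (n - 1 + j)" for j
  define b where "b j = exp (\<bar>v j\<bar> / (1 - pm))" for j
  have in_n: "n \<in> {1..n}" "i \<in> {1..n}" using i by auto
  have pm0: "0 \<le> pm" using p in_n(1) by force
  have t_le: "\<bar>- v j * X n * X j\<bar> \<le> \<bar>v j\<bar>" if "j \<in> {1..n-1}" for j
  proof -
    have "\<bar>X n\<bar> \<le> 1" "\<bar>X j\<bar> \<le> 1" using that abs_le_one_if_obs_space[OF X] by auto
    then have "\<bar>v j\<bar> * \<bar>X n * X j\<bar> \<le> \<bar>v j\<bar>" by (simp add: abs_mult mult_left_le mult_le_one)
    then show ?thesis by (simp add: abs_mult mult.assoc)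
  qed
  have factor_n_le: "\<bar>- (X n / (1 - p n))\<bar> \<le> 1 / (1 - pm)"
  proof -
    have "\<bar>1 * X n / (1 - p n)\<bar> \<le> \<bar>1\<bar> / (1 - pm)"
      using abs_le_one_if_obs_space[OF X in_n(1)] p in_n(1) pm
      by (intro abs_mult_div_one_minus_le) auto
    then show ?thesis by simp
  qed
  have factor_i_le: "\<bar>exp (- v i * X n * X i) * X i / (1 - p i)\<bar> \<le> b i / (1 - pm)"
  proof -
    have "exp (- v i * X n * X i) \<le> b i"
      using abs_exp_minus_div_le_exp[of 0 pm, OF _ pm0 pm t_le[OF i]] by (simp add: b_def)
    moreover have "\<bar>exp (- v i * X n * X i) * X i / (1 - p i)\<bar> \<le> \<bar>exp (- v i * X n * X i)\<bar> / (1 - pm)"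
      using abs_le_one_if_obs_space[OF X in_n(2)] p in_n(2) pm
      by (intro abs_mult_div_one_minus_le) auto
    ultimately show ?thesis using pm by (simp add: divide_right_mono order_trans)
  qed
  have other_factors_le: "\<bar>\<Prod>j\<in>{1..n-1}-{i}. (exp (- v j * X n * X j) - p j) / (1 - p j)\<bar>
      \<le> (\<Prod>j\<in>{1..n-1}-{i}. b j)"
    unfolding abs_prod
  proof (rule prod_mono)
    fix j assume j: "j \<in> {1..n-1} - {i}"
    hence "0 \<le> p j" "p j \<le> pm" using p by auto
    then show "0 \<le> \<bar>(exp (- v j * X n * X j) - p j) / (1 - p j)\<bar>
        \<and> \<bar>(exp (- v j * X n * X j) - p j) / (1 - p j)\<bar> \<le> b j"
      using abs_exp_minus_div_le_exp[OF _ _ pm t_le] j pm by (simp add: b_def abs_divide)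
  qed
  have "\<bar>g_miss p n i w X\<bar> = \<bar>- (X n / (1 - p n))\<bar> * \<bar>exp (- v i * X n * X i) * X i / (1 - p i)\<bar>
      * \<bar>\<Prod>j\<in>{1..n-1}-{i}. (exp (- v j * X n * X j) - p j) / (1 - p j)\<bar>"
    unfolding g_miss_def v_def Let_def by (simp add: abs_mult)
  also have "\<dots> \<le> 1 / (1 - pm) * (b i / (1 - pm)) * (\<Prod>j\<in>{1..n-1}-{i}. b j)"
    using factor_n_le factor_i_le other_factors_le pm by (intro mult_mono) (auto simp: b_def)
  also have "\<dots> = 1 / (1 - pm)^2 * prod b {1..n-1}"
    using i by (simp add: prod.remove power2_eq_square)
  also have "prod b {1..n-1} = exp ((\<Sum>j\<in>{1..n-1}. \<bar>v j\<bar>) / (1 - pm))"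
    by (simp add: b_def exp_sum sum_divide_distrib)
  also have "1 / (1 - pm)^2 * \<dots> \<le> 1 / (1 - pm)^2 * exp (lam / (1 - pm))"
    using lam pm by (simp add: v_def divide_right_mono)
  finally show ?thesis .
qed

theorem mainTheorem5:
  fixes A :: "nat \<Rightarrow> nat \<Rightarrow> real" and p :: "nat \<Rightarrow> real"
    and n :: nat and lam :: real
  assumes n2: "n \<ge> 2"
    and symm: "\<forall>i\<in>{1..n}. \<forall>j\<in>{1..n}. A i j = A j i"
    and diag: "\<forall>i\<in>{1..n}. A i i = 0"
    and lam_pos: "lam > 0"
    and p_range: "\<forall>i\<in>{1..n}. 0 \<le> p i \<and> p i < 1"
  shows "(\<forall>w :: nat \<Rightarrow> real. \<forall>k\<in>{1..2*n-1}.
            ((\<lambda>t. S_tilde A n (w(k := t))) has_real_derivative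
               miss_expect A p n (\<lambda>X. G_miss p n w X k)) (at (w k)))
       \<and> (\<forall>X\<in>obs_space n. \<forall>w\<in>simplex lam (2*n-1). \<forall>k\<in>{1..2*n-1}.
            \<bar>G_miss p n w X k\<bar> \<le>
              1 / (1 - Max (p ` {1..n}))^2 * exp (lam / (1 - Max (p ` {1..n}))))"
proof (intro conjI ballI allI)
  fix w :: "nat \<Rightarrow> real" and k
  show "((\<lambda>t. S_tilde A n (w(k := t))) has_real_derivative
          miss_expect A p n (\<lambda>X. G_miss p n w X k)) (at (w k))"
    using S_tilde_has_real_derivative miss_expect_G_miss p_range by simp
next
  fix X w k assume X: "X \<in> obs_space n" and w: "w \<in> simplex lam (2*n-1)"
  define pm where "pm = Max (p ` {1..n})"
  have "pm \<in> p ` {1..n}" using n2 unfolding pm_def by (intro Max_in) auto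
  hence pm: "pm < 1" using p_range by auto
  have "\<forall>j\<in>{1..n}. 0 \<le> p j \<and> p j \<le> pm" using p_range by (simp add: pm_def)
  then have "\<forall>i\<in>{1..n-1}. \<bar>g_miss p n i w X\<bar> \<le> 1 / (1 - pm)^2 * exp (lam / (1 - pm))"
    using abs_g_miss_le[OF _ X sum_abs_diff_le_if_simplex[OF w] _ pm] by blast
  then show "\<bar>G_miss p n w X k\<bar> \<le> 1 / (1 - Max (p ` {1..n}))^2 * exp (lam / (1 - Max (p ` {1..n})))"
    unfolding pm_def[symmetric] by (rule abs_G_miss_le) simp
qed

end
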